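(* Let $0<r'<r<1$ and $c>0$. Then the map $F:\mathbb{Z}((T))_{r,\le c}\to\mathbb{R}$, $\sum_{n\gg-\infty}a_nT^n\mapsto\sum_{n\gg-\infty}a_n(r')^n$, is continuous.
   Context: $\mathbb{Z}((T))_{r,\le c}$ is the set of integer Laurent series $\sum_{n\gg-\infty}a_nT^n$ ($a_n\in\mathbb{Z}$, $a_n=0$ for $n$ sufficiently negative) with $\sum|a_n|r^n\le c$, with the $T$-adic topology given by the norm $\|f\|=\delta^{v_T(f)}$ for fixed $\delta\in(0,1)$, $v_T(f)$ being the smallest index of a nonzero coefficient. $\mathbb{R}$ has its usual topology. *)

theory Defs
  imports "HOL-Analysis.Analysis"
begin

text \<open>Integer Laurent series: coefficient functions int => int vanishing for sufficiently negative indices.\<close>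
definition laurent :: "(int \<Rightarrow> int) set" where
  "laurent = {a. \<exists>N. \<forall>n<N. a n = 0}"

definition laurent_rc :: "real \<Rightarrow> real \<Rightarrow> (int \<Rightarrow> int) set" where
  "laurent_rc r c = {a \<in> laurent.
      (\<lambda>n. real_of_int \<bar>a n\<bar> * r powi n) summable_on UNIV \<and>
      (\<Sum>\<^sub>\<infinity>n. real_of_int \<bar>a n\<bar> * r powi n) \<le> c}"

definition tval :: "(int \<Rightarrow> int) \<Rightarrow> int" where
  "tval a = (LEAST n. a n \<noteq> 0)"

definition tnorm :: "real \<Rightarrow> (int \<Rightarrow> int) \<Rightarrow> real" where
  "tnorm \<delta> a = (if a = (\<lambda>_. 0) then 0 else \<delta> powi tval a)"

definition laurent_eval :: "real \<Rightarrow> (int \<Rightarrow> int) \<Rightarrow> real" where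
  "laurent_eval s a = (\<Sum>\<^sub>\<infinity>n. real_of_int (a n) * s powi n)"

end

theory Submission
  imports Defs
begin

text \<open>If \<open>\<parallel>g - f\<parallel> < \<delta>\<^sup>N\<close> in the \<open>T\<close>-adic norm, then \<open>f\<close> and \<open>g\<close> agree in all degrees below \<open>N\<close>,
  so \<open>F g - F f = \<Sum>\<^bsub>n\<ge>N\<^esub> (g\<^sub>n - f\<^sub>n) r'\<^sup>n\<close>. For \<open>n \<ge> N \<ge> 0\<close> we have \<open>r'\<^sup>n \<le> (r'/r)\<^sup>N r\<^sup>n\<close>,
  hence \<open>\<bar>F g - F f\<bar> \<le> (r'/r)\<^sup>N (\<Sum> \<bar>g\<^sub>n\<bar> r\<^sup>n + \<Sum> \<bar>f\<^sub>n\<bar> r\<^sup>n) \<le> 2 c (r'/r)\<^sup>N\<close>,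
  which is small for large \<open>N\<close> since \<open>r' < r\<close>.\<close>

lemma laurent_diff:
  assumes "f \<in> laurent" "g \<in> laurent"
  shows "(\<lambda>n. g n - f n) \<in> laurent"
proof -
  obtain M1 M2 where "\<forall>n<M1. f n = 0" "\<forall>n<M2. g n = 0"
    using assms unfolding laurent_def by blast
  then have "\<forall>n<min M1 M2. g n - f n = 0" by simp
  then show ?thesis unfolding laurent_def by blast
qed

lemma tval_le:
  assumes "a \<in> laurent" "a n \<noteq> 0"
  shows "tval a \<le> n"
proof -
  obtain M where M: "\<forall>m<M. a m = 0" using assms(1) unfolding laurent_def by blast
  define S where "S = {m. m \<le> n \<and> a m \<noteq> 0}"
  have "S \<subseteq> {M..n}" using M unfolding S_def by (auto simp: not_less[symmetric])
  then have "finite S" by (rule finite_subset) simp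
  moreover have "n \<in> S" using assms(2) unfolding S_def by simp
  ultimately have "tval a = Min S"
    unfolding tval_def
    by (intro Least_equality) (use Min_in[of S] Min_le[of S] S_def in \<open>fastforce+\<close>)
  then show ?thesis using \<open>finite S\<close> \<open>n \<in> S\<close> by simp
qed

lemma tnorm_less_power_int_imp_zero:
  assumes "a \<in> laurent" "0 < \<delta>" "\<delta> < 1" "tnorm \<delta> a < \<delta> powi N" "n \<le> N"
  shows "a n = 0"
proof (rule ccontr)
  assume "a n \<noteq> 0"
  then have "a \<noteq> (\<lambda>_. 0)" and "tval a \<le> N"
    using tval_le[OF assms(1)] assms(5) by force+
  then have "\<delta> powi N \<le> tnorm \<delta> a"
    unfolding tnorm_def using assms(2,3) by (simp add: power_int_decreasing)
  then show False using assms(4) by simp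
qed

lemma powi_series_smaller_radius:
  fixes a :: "int \<Rightarrow> real" and N :: int
  assumes vanish: "\<forall>n<N. a n = 0" and "0 < s" "s \<le> r"
    and summable: "(\<lambda>n. \<bar>a n\<bar> * r powi n) summable_on UNIV"
  shows "(\<lambda>n. norm (a n * s powi n)) summable_on UNIV"
    and "\<bar>\<Sum>\<^sub>\<infinity>n. a n * s powi n\<bar> \<le> (s / r) powi N * (\<Sum>\<^sub>\<infinity>n. \<bar>a n\<bar> * r powi n)"
proof -
  define q where "q = s / r"
  have q: "0 < q" "q \<le> 1" using assms(2,3) by (auto simp: q_def)
  have bound: "norm (a n * s powi n) \<le> q powi N * (\<bar>a n\<bar> * r powi n)" for n
  proof (cases "n < N")
    case False
    have "s powi n = q powi n * r powi n"
      using assms(2,3) by (simp add: q_def power_int_divide_distrib)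
    also have "\<dots> \<le> q powi N * r powi n"
      using q False assms(2,3) by (intro mult_right_mono power_int_decreasing) auto
    finally show ?thesis
      using assms(2) by (simp add: abs_mult mult.left_commute mult_left_mono)
  qed (use vanish q assms(2,3) in simp)
  have summable_bound: "(\<lambda>n. q powi N * (\<bar>a n\<bar> * r powi n)) summable_on UNIV"
    using summable by (rule summable_on_cmult_right)
  show abs_summable: "(\<lambda>n. norm (a n * s powi n)) summable_on UNIV"
    using summable_bound bound by (rule Infinite_Sum.abs_summable_on_comparison_test')
  have "\<bar>\<Sum>\<^sub>\<infinity>n. a n * s powi n\<bar> \<le> (\<Sum>\<^sub>\<infinity>n. norm (a n * s powi n))"
    using norm_infsum_bound[OF abs_summable] by simp
  also have "\<dots> \<le> (\<Sum>\<^sub>\<infinity>n. q powi N * (\<bar>a n\<bar> * r powi n))"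
    using abs_summable summable_bound bound by (rule infsum_mono)
  also have "\<dots> = q powi N * (\<Sum>\<^sub>\<infinity>n. \<bar>a n\<bar> * r powi n)"
    using summable by (rule infsum_cmult_right)
  finally show "\<bar>\<Sum>\<^sub>\<infinity>n. a n * s powi n\<bar> \<le> (s / r) powi N * (\<Sum>\<^sub>\<infinity>n. \<bar>a n\<bar> * r powi n)"
    by (simp add: q_def)
qed

lemma laurent_rc_eval_abs_summable:
  assumes "f \<in> laurent_rc r c" "0 < s" "s \<le> r"
  shows "(\<lambda>n. norm (real_of_int (f n) * s powi n)) summable_on UNIV"
proof -
  obtain M where "\<forall>n<M. f n = 0"
    using assms(1) unfolding laurent_rc_def laurent_def by blast
  then show ?thesis
    using assms powi_series_smaller_radius(1)[of M "\<lambda>n. real_of_int (f n)" s r]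
    unfolding laurent_rc_def by simp
qed

lemma laurent_eval_diff:
  assumes "f \<in> laurent_rc r c" "g \<in> laurent_rc r c" "0 < s" "s \<le> r"
  shows "laurent_eval s g - laurent_eval s f = (\<Sum>\<^sub>\<infinity>n. real_of_int (g n - f n) * s powi n)"
proof -
  have "(\<lambda>n. real_of_int (f n) * s powi n) summable_on UNIV"
    and "(\<lambda>n. real_of_int (g n) * s powi n) summable_on UNIV"
    using laurent_rc_eval_abs_summable[OF assms(1,3,4)] laurent_rc_eval_abs_summable[OF assms(2,3,4)]
    by (auto intro: Infinite_Sum.abs_summable_summable)
  then show ?thesis
    unfolding laurent_eval_def
    using infsum_add[of "\<lambda>n. real_of_int (g n) * s powi n" UNIV "\<lambda>n. - (real_of_int (f n) * s powi n)"]
    by (simp add: summable_on_uminus infsum_uminus left_diff_distrib)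
qed

lemma laurent_rc_diff_weight_bound:
  assumes "f \<in> laurent_rc r c" "g \<in> laurent_rc r c" "0 < r"
  shows "(\<lambda>n. \<bar>real_of_int (g n - f n)\<bar> * r powi n) summable_on UNIV"
    and "(\<Sum>\<^sub>\<infinity>n. \<bar>real_of_int (g n - f n)\<bar> * r powi n) \<le> 2 * c"
proof -
  define wf where "wf = (\<lambda>n. \<bar>real_of_int (f n)\<bar> * r powi n)"
  define wg where "wg = (\<lambda>n. \<bar>real_of_int (g n)\<bar> * r powi n)"
  have wf: "wf summable_on UNIV" "infsum wf UNIV \<le> c"
    and wg: "wg summable_on UNIV" "infsum wg UNIV \<le> c"
    using assms(1,2) unfolding laurent_rc_def wf_def wg_def by auto
  have summable_sum: "(\<lambda>n. wg n + wf n) summable_on UNIV"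
    using wg(1) wf(1) by (rule summable_on_add)
  have triangle: "\<bar>real_of_int (g n - f n)\<bar> * r powi n \<le> wg n + wf n" for n
    using assms(3) unfolding wf_def wg_def
    by (simp flip: distrib_right add: mult_right_mono abs_triangle_ineq4)
  show summable: "(\<lambda>n. \<bar>real_of_int (g n - f n)\<bar> * r powi n) summable_on UNIV"
    using Infinite_Sum.abs_summable_on_comparison_test'[OF summable_sum, of "\<lambda>n. \<bar>real_of_int (g n - f n)\<bar> * r powi n"]
      triangle assms(3) by simp
  have "(\<Sum>\<^sub>\<infinity>n. \<bar>real_of_int (g n - f n)\<bar> * r powi n) \<le> (\<Sum>\<^sub>\<infinity>n. wg n + wf n)"
    using summable summable_sum triangle by (rule infsum_mono)
  also have "\<dots> = infsum wg UNIV + infsum wf UNIV"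
    using wg(1) wf(1) by (rule infsum_add)
  finally show "(\<Sum>\<^sub>\<infinity>n. \<bar>real_of_int (g n - f n)\<bar> * r powi n) \<le> 2 * c"
    using wf(2) wg(2) by simp
qed

theorem mainTheorem13:
  fixes r r' c \<delta> :: real
  assumes "0 < r'" and "r' < r" and "r < 1" and "0 < c"
    and "0 < \<delta>" and "\<delta> < 1"
  shows "\<forall>f\<in>laurent_rc r c. \<forall>\<epsilon>>0. \<exists>\<eta>>0. \<forall>g\<in>laurent_rc r c.
           tnorm \<delta> (\<lambda>n. g n - f n) < \<eta> \<longrightarrow>
           \<bar>laurent_eval r' g - laurent_eval r' f\<bar> < \<epsilon>"
proof (intro ballI allI impI)
  fix f :: "int \<Rightarrow> int" and \<epsilon> :: real
  assume f: "f \<in> laurent_rc r c" and "\<epsilon> > 0"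
  define q where "q = r' / r"
  have q: "0 < q" "q < 1" using assms(1,2) by (auto simp: q_def)
  obtain N :: nat where N: "q ^ N < \<epsilon> / (2 * c)"
    using real_arch_pow_inv[of "\<epsilon> / (2 * c)" q] q \<open>\<epsilon> > 0\<close> assms(4) by auto
  show "\<exists>\<eta>>0. \<forall>g\<in>laurent_rc r c. tnorm \<delta> (\<lambda>n. g n - f n) < \<eta> \<longrightarrow>
          \<bar>laurent_eval r' g - laurent_eval r' f\<bar> < \<epsilon>"
  proof (intro exI[of _ "\<delta> ^ N"] conjI ballI impI)
    show "\<delta> ^ N > 0" using assms(5) by simp
    fix g assume g: "g \<in> laurent_rc r c" and close: "tnorm \<delta> (\<lambda>n. g n - f n) < \<delta> ^ N"
    have "(\<lambda>n. g n - f n) \<in> laurent"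
      using f g by (intro laurent_diff) (auto simp: laurent_rc_def)
    moreover have "tnorm \<delta> (\<lambda>n. g n - f n) < \<delta> powi int N" using close by simp
    ultimately have "\<forall>n<int N. real_of_int (g n - f n) = 0"
      using tnorm_less_power_int_imp_zero[OF _ assms(5,6)] by (metis less_imp_le of_int_0)
    have "\<bar>laurent_eval r' g - laurent_eval r' f\<bar> = \<bar>\<Sum>\<^sub>\<infinity>n. real_of_int (g n - f n) * r' powi n\<bar>"
      using laurent_eval_diff[OF f g assms(1)] assms(2) by simp
    also have "\<dots> \<le> q ^ N * (\<Sum>\<^sub>\<infinity>n. \<bar>real_of_int (g n - f n)\<bar> * r powi n)"
      using powi_series_smaller_radius(2)[OF \<open>\<forall>n<int N. _\<close> assms(1) _ laurent_rc_diff_weight_bound(1)[OF f g]]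
        assms(1,2) by (simp add: q_def)
    also have "\<dots> \<le> q ^ N * (2 * c)"
      using laurent_rc_diff_weight_bound(2)[OF f g] q assms(1,2) by (intro mult_left_mono) auto
    also have "\<dots> < \<epsilon>" using N assms(4) by (simp add: field_simps)
    finally show "\<bar>laurent_eval r' g - laurent_eval r' f\<bar> < \<epsilon>" .
  qed
qed

end
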